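(* A family of structures $\mathfrak{K}$ is $\mathbf{nUs}$-learnable if and only if $\mathfrak{K}$ is a solid $\Sigma^{\mathrm{inf}}_1$-partial order.
   Context: All structures are countable, have domain $\mathbb{N}$, are in a finite relational signature, and are identified with their atomic diagrams. A family of structures $\mathfrak{K}$ is a countable set of pairwise nonisomorphic such structures. $\mathcal{S}\restriction_s$ is the finite substructure of $\mathcal{S}$ on $\{0,\dots,s\}$. $\mathrm{LD}(\mathfrak{K})$ is the set of structures with domain $\mathbb{N}$ isomorphic to a member of $\mathfrak{K}$. The hypothesis space is $\{\ulcorner\mathcal{A}\urcorner:\mathcal{A}\in\mathfrak{K}\}\cup\{?\}$; a learner is an arbitrary function $\mathbf{M}$ from $\{\mathcal{S}\restriction_s:\mathcal{S}\in\mathrm{LD}(\mathfrak{K}),s\in\mathbb{N}\}$ to the hypothesis space. $\mathbf{M}$ $\mathbf{nUs}$-learns $\mathfrak{K}$ if for every $\mathcal{S}\in\mathrm{LD}(\mathfrak{K})$ with $\mathcal{S}\cong\mathcal{A}\in\mathfrak{K}$, $\mathbf{M}(\mathcal{S}\restriction_n)$ is eventually constantly $\ulcorner\mathcal{A}\urcorner$, and moreover if $n_0$ is least with $\mathbf{M}(\mathcal{S}\restriction_{n_0})=\ulcorner\mathcal{A}\urcorner$ then $\mathbf{M}(\mathcal{S}\restriction_m)=\ulcorner\mathcal{A}\urcorner$ for all $m>n_0$; $\mathfrak{K}$ is $\mathbf{nUs}$-learnable if some learner $\mathbf{nUs}$-learns it. $\mathrm{Th}_{\Sigma^{\mathrm{inf}}_1}(\mathcal{A})$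 is the set of $\Sigma^{\mathrm{inf}}_1$ sentences of $\mathcal{L}_{\omega_1\omega}$ true in $\mathcal{A}$ (a $\Sigma^{\mathrm{inf}}_1$ formula is a countable disjunction $\bigvee_i\exists\bar y_i\,\psi_i$ with each $\psi_i$ finitary quantifier-free). $\mathfrak{K}$ is a $\Sigma^{\mathrm{inf}}_1$-partial order if distinct members have distinct $\Sigma^{\mathrm{inf}}_1$-theories. $\mathfrak{K}$ is a solid $\Sigma^{\mathrm{inf}}_1$-partial order if it is a $\Sigma^{\mathrm{inf}}_1$-partial order and for every (nonempty) $\mathcal{A}\in\mathfrak{K}$, $\mathrm{Th}_{\Sigma^{\mathrm{inf}}_1}(\mathcal{A})\setminus\bigcup\{\mathrm{Th}_{\Sigma^{\mathrm{inf}}_1}(\mathcal{B}):\mathcal{B}\in\mathfrak{K},\ \mathrm{Th}_{\Sigma^{\mathrm{inf}}_1}(\mathcal{B})\subsetneq\mathrm{Th}_{\Sigma^{\mathrm{inf}}_1}(\mathcal{A})\}\neq\emptyset$. *)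

theory Defs
  imports Main "HOL-Library.Countable_Set"
begin

text \<open>A finite relational signature is a list of arities: relation symbol i (i < length sig)
  has arity sig ! i.  A structure with domain the naturals is identified with its atomic
  diagram, i.e. a predicate R with R i xs meaning that relation i holds of the tuple xs.\<close>

type_synonym struc = "nat \<Rightarrow> nat list \<Rightarrow> bool"

definition wf_struc :: "nat list \<Rightarrow> struc \<Rightarrow> bool" where
  "wf_struc sig S \<longleftrightarrow> (\<forall>i xs. S i xs \<longrightarrow> i < length sig \<and> length xs = sig ! i)"

definition iso :: "struc \<Rightarrow> struc \<Rightarrow> bool" where
  "iso S T \<longleftrightarrow> (\<exists>f. bij f \<and> (\<forall>i xs. S i xs \<longleftrightarrow> T i (map f xs)))"

definition family :: "nat list \<Rightarrow> struc set \<Rightarrow> bool" where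
  "family sig K \<longleftrightarrow> countable K \<and> (\<forall>A\<in>K. wf_struc sig A)
     \<and> (\<forall>A\<in>K. \<forall>B\<in>K. iso A B \<longrightarrow> A = B)"

definition LD :: "nat list \<Rightarrow> struc set \<Rightarrow> struc set" where
  "LD sig K = {S. wf_struc sig S \<and> (\<exists>A\<in>K. iso S A)}"

text \<open>The finite substructure on {0,...,s}, represented as (s, its atomic diagram).\<close>
definition restr :: "struc \<Rightarrow> nat \<Rightarrow> nat \<times> struc" where
  "restr S s = (s, \<lambda>i xs. S i xs \<and> set xs \<subseteq> {..s})"

text \<open>Learners: the hypothesis \<open>\<ulcorner>A\<urcorner>\<close> is represented by Some A, and ? by None.\<close>
type_synonym learner = "nat \<times> struc \<Rightarrow> struc option"

definition nUs_learns :: "nat list \<Rightarrow> struc set \<Rightarrow> learner \<Rightarrow> bool" where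
  "nUs_learns sig K M \<longleftrightarrow>
     (\<forall>S\<in>LD sig K. \<forall>s. M (restr S s) = None \<or> (\<exists>A\<in>K. M (restr S s) = Some A)) \<and>
     (\<forall>S\<in>LD sig K. \<forall>A\<in>K. iso S A \<longrightarrow>
        (\<exists>n0. \<forall>n\<ge>n0. M (restr S n) = Some A) \<and>
        (\<forall>n0. M (restr S n0) = Some A \<and> (\<forall>k<n0. M (restr S k) \<noteq> Some A)
              \<longrightarrow> (\<forall>m>n0. M (restr S m) = Some A)))"

definition nUs_learnable :: "nat list \<Rightarrow> struc set \<Rightarrow> bool" where
  "nUs_learnable sig K \<longleftrightarrow> (\<exists>M. nUs_learns sig K M)"

datatype qf = Eq nat nat | Rel nat "nat list" | Neg qf | Conj qf qf

fun wf_qf :: "nat list \<Rightarrow> qf \<Rightarrow> bool" where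
  "wf_qf sig (Eq a b) = True"
| "wf_qf sig (Rel i xs) = (i < length sig \<and> length xs = sig ! i)"
| "wf_qf sig (Neg p) = wf_qf sig p"
| "wf_qf sig (Conj p q) = (wf_qf sig p \<and> wf_qf sig q)"

fun sat :: "struc \<Rightarrow> (nat \<Rightarrow> nat) \<Rightarrow> qf \<Rightarrow> bool" where
  "sat S v (Eq a b) = (v a = v b)"
| "sat S v (Rel i xs) = S i (map v xs)"
| "sat S v (Neg p) = (\<not> sat S v p)"
| "sat S v (Conj p q) = (sat S v p \<and> sat S v q)"

text \<open>A \<open>\<Sigma>\<^sup>i\<^sup>n\<^sup>f\<^sub>1\<close> sentence \<open>\<Or>\<^sub>i \<exists>y\<^sub>i \<psi>\<^sub>i\<close> is represented by the countable set of its
  disjuncts \<open>\<psi>\<^sub>i\<close>, each understood under the existential closure of all its variables.\<close>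
definition sigma1_sentence :: "nat list \<Rightarrow> qf set \<Rightarrow> bool" where
  "sigma1_sentence sig \<Phi> \<longleftrightarrow> countable \<Phi> \<and> (\<forall>\<psi>\<in>\<Phi>. wf_qf sig \<psi>)"

definition models_sigma1 :: "struc \<Rightarrow> qf set \<Rightarrow> bool" where
  "models_sigma1 S \<Phi> \<longleftrightarrow> (\<exists>\<psi>\<in>\<Phi>. \<exists>v. sat S v \<psi>)"

definition Th_sigma1 :: "nat list \<Rightarrow> struc \<Rightarrow> qf set set" where
  "Th_sigma1 sig S = {\<Phi>. sigma1_sentence sig \<Phi> \<and> models_sigma1 S \<Phi>}"

definition sigma1_partial_order :: "nat list \<Rightarrow> struc set \<Rightarrow> bool" where
  "sigma1_partial_order sig K \<longleftrightarrow>
     (\<forall>A\<in>K. \<forall>B\<in>K. A \<noteq> B \<longrightarrow> Th_sigma1 sig A \<noteq> Th_sigma1 sig B)"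

definition solid_sigma1_partial_order :: "nat list \<Rightarrow> struc set \<Rightarrow> bool" where
  "solid_sigma1_partial_order sig K \<longleftrightarrow> sigma1_partial_order sig K \<and>
     (\<forall>A\<in>K. Th_sigma1 sig A -
        \<Union>{Th_sigma1 sig B | B. B \<in> K \<and> Th_sigma1 sig B \<subset> Th_sigma1 sig A} \<noteq> {})"

end

theory Submission
  imports Defs
begin

text \<open>
  Suppose a learner never abandons a correct conjecture once made. For \<open>A \<in> K\<close>, the disjunction
  of the finite diagrams on which it conjectures \<open>A\<close> while reading a copy of \<open>A\<close> is a
  \<open>\<Sigma>\<^sup>i\<^sup>n\<^sup>f\<^sub>1\<close> sentence true in \<open>A\<close>. If it also held in some \<open>B \<noteq> A\<close> with
  \<open>Th(B) \<subseteq> Th(A)\<close>, we could continue such a diagram to a copy of \<open>B\<close> until the learner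
  conjectures \<open>B\<close>, and since the diagram read so far is an existential sentence of \<open>B\<close>, hence of
  \<open>A\<close>, complete it to a copy of \<open>A\<close>: the learner would have abandoned the correct \<open>A\<close>.
  This gives both distinct theories and solidity.

  Conversely, fix for each \<open>A\<close> a tell-tale sentence in \<open>Th(A)\<close> but in no smaller theory. At stage
  \<open>k\<close> a structure \<open>B\<close> is a candidate if its tell-tale is witnessed among the first \<open>k + 1\<close>
  elements and everything existential witnessed there holds in \<open>B\<close>. The learner keeps its
  conjecture while it remains a candidate and otherwise switches to the candidate of least index.
  Along a copy of \<open>A\<close>, \<open>A\<close> is a candidate from some stage on, so it is never abandoned once
  conjectured; and a structure that is a candidate infinitely often has a theory containing
  \<open>Th(A)\<close> and its tell-tale in \<open>Th(A)\<close>, so it is \<open>A\<close>.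
\<close>

section \<open>Existential sentences and isomorphism\<close>

instance qf :: countable by countable_datatype

definition holds :: "struc \<Rightarrow> qf \<Rightarrow> bool" where
  "holds S p \<longleftrightarrow> (\<exists>v. sat S v p)"

definition holds_below :: "nat \<Rightarrow> struc \<Rightarrow> qf \<Rightarrow> bool" where
  "holds_below k S p \<longleftrightarrow> (\<exists>v. (\<forall>x. v x \<le> k) \<and> sat S v p)"

lemma models_sigma1_iff_holds: "models_sigma1 S \<Phi> \<longleftrightarrow> (\<exists>\<psi>\<in>\<Phi>. holds S \<psi>)"
  unfolding models_sigma1_def holds_def ..

lemma singleton_in_Th_sigma1_iff: "wf_qf sig p \<Longrightarrow> {p} \<in> Th_sigma1 sig S \<longleftrightarrow> holds S p"
  unfolding Th_sigma1_def sigma1_sentence_def models_sigma1_iff_holds by simp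

fun qf_vars :: "qf \<Rightarrow> nat set" where
  "qf_vars (Eq a b) = {a, b}"
| "qf_vars (Rel i xs) = set xs"
| "qf_vars (Neg p) = qf_vars p"
| "qf_vars (Conj p q) = qf_vars p \<union> qf_vars q"

lemma finite_qf_vars: "finite (qf_vars p)"
  by (induction p) auto

lemma sat_cong: "(\<And>x. x \<in> qf_vars p \<Longrightarrow> v x = w x) \<Longrightarrow> sat S v p \<longleftrightarrow> sat S w p"
  by (induction p) (auto cong: map_cong)

lemma holds_below_imp_holds: "holds_below k S p \<Longrightarrow> holds S p"
  unfolding holds_below_def holds_def by blast

lemma holds_below_mono: "holds_below k S p \<Longrightarrow> k \<le> k' \<Longrightarrow> holds_below k' S p"
  unfolding holds_below_def using order_trans by blast

lemma holds_imp_eventually_holds_below: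
  assumes "holds S p"
  shows "\<forall>\<^sub>F k in sequentially. holds_below k S p"
proof -
  obtain v where v: "sat S v p" using assms unfolding holds_def by blast
  define w where "w x = (if x \<in> qf_vars p then v x else 0)" for x
  have "sat S w p" using v sat_cong[of p w v] unfolding w_def by simp
  moreover have "w x \<le> Max (v ` qf_vars p)" for x
    using finite_qf_vars unfolding w_def by auto
  ultimately show ?thesis
    unfolding eventually_sequentially holds_below_def by (blast intro: order_trans)
qed

lemma sat_restr: "(\<forall>x. v x \<le> n) \<Longrightarrow> sat (snd (restr S n)) v p \<longleftrightarrow> sat S v p"
  by (induction p) (auto simp: restr_def)

lemma holds_below_restr: "k \<le> n \<Longrightarrow> holds_below k (snd (restr S n)) p \<longleftrightarrow> holds_below k S p"
  unfolding holds_below_def using sat_restr order_trans by meson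

lemma restr_eq_mono: "restr S n = restr T n \<Longrightarrow> m \<le> n \<Longrightarrow> restr S m = restr T m"
  unfolding restr_def by (auto simp: fun_eq_iff) (metis order_trans atMost_iff subsetD subsetI)+

lemma sat_map: "inj f \<Longrightarrow> (\<And>i xs. S i xs \<longleftrightarrow> A i (map f xs)) \<Longrightarrow> sat S v p \<longleftrightarrow> sat A (f \<circ> v) p"
  by (induction p) (auto dest: injD)

lemma iso_refl: "iso S S"
  unfolding iso_def by (intro exI[of _ id]) auto

lemma iso_sym: "iso S A \<Longrightarrow> iso A S"
proof -
  assume "iso S A"
  then obtain f where f: "bij f" "\<forall>i xs. S i xs \<longleftrightarrow> A i (map f xs)" unfolding iso_def by blast
  have "A i xs \<longleftrightarrow> S i (map (inv f) xs)" for i xs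
    using f surj_iff[THEN iffD1, OF bij_is_surj[OF f(1)]] by simp
  then show ?thesis unfolding iso_def using bij_imp_bij_inv[OF f(1)] by blast
qed

lemma iso_holds_imp: "iso S A \<Longrightarrow> holds S p \<Longrightarrow> holds A p"
  unfolding iso_def holds_def using sat_map bij_is_inj by blast

lemma iso_holds: "iso S A \<Longrightarrow> holds S p \<longleftrightarrow> holds A p"
  using iso_holds_imp iso_sym by blast

lemma Th_sigma1_iso: "iso S A \<Longrightarrow> Th_sigma1 sig S = Th_sigma1 sig A"
  unfolding Th_sigma1_def models_sigma1_iff_holds using iso_holds by blast

section \<open>Finite diagrams\<close>

fun conjs :: "qf list \<Rightarrow> qf" where
  "conjs [] = Eq 0 0"
| "conjs (p # ps) = Conj p (conjs ps)"

lemma sat_conjs: "sat S v (conjs ps) \<longleftrightarrow> (\<forall>p\<in>set ps. sat S v p)"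
  by (induction ps) auto

lemma wf_qf_conjs: "wf_qf sig (conjs ps) \<longleftrightarrow> (\<forall>p\<in>set ps. wf_qf sig p)"
  by (induction ps) auto

definition distinct_conj :: "nat \<Rightarrow> qf" where
  "distinct_conj n = conjs [Neg (Eq a b). a \<leftarrow> [0..<Suc n], b \<leftarrow> [0..<Suc n], a \<noteq> b]"

definition literal :: "struc \<Rightarrow> nat \<Rightarrow> nat list \<Rightarrow> qf" where
  "literal S i xs = (if S i xs then Rel i xs else Neg (Rel i xs))"

definition literals_conj :: "nat list \<Rightarrow> nat \<Rightarrow> struc \<Rightarrow> qf" where
  "literals_conj sig n S =
     conjs [literal S i xs. i \<leftarrow> [0..<length sig], xs \<leftarrow> List.n_lists (sig ! i) [0..<Suc n]]"

definition diagram :: "nat list \<Rightarrow> nat \<Rightarrow> struc \<Rightarrow> qf" where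
  "diagram sig n S = Conj (distinct_conj n) (literals_conj sig n S)"

lemma sat_distinct_conj: "sat B w (distinct_conj n) \<longleftrightarrow> inj_on w {..n}"
proof -
  have "set [Neg (Eq a b). a \<leftarrow> [0..<Suc n], b \<leftarrow> [0..<Suc n], a \<noteq> b] =
      {Neg (Eq a b) | a b. a \<le> n \<and> b \<le> n \<and> a \<noteq> b}"
    by (auto simp del: upt_Suc)
  then show ?thesis unfolding distinct_conj_def sat_conjs inj_on_def by force
qed

lemma sat_literal: "sat B w (literal S i xs) \<longleftrightarrow> B i (map w xs) = S i xs"
  unfolding literal_def by auto

lemma sat_literals_conj:
  "sat B w (literals_conj sig n S) \<longleftrightarrow>
     (\<forall>i<length sig. \<forall>xs. length xs = sig ! i \<and> set xs \<subseteq> {..n} \<longrightarrow> B i (map w xs) = S i xs)"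
proof -
  have "set xs \<subseteq> {0..<Suc n} \<longleftrightarrow> set xs \<subseteq> {..n}" for xs :: "nat list"
    by auto
  then have lits: "set [literal S i xs. i \<leftarrow> [0..<length sig], xs \<leftarrow> List.n_lists (sig ! i) [0..<Suc n]] =
      {literal S i xs | i xs. i < length sig \<and> length xs = sig ! i \<and> set xs \<subseteq> {..n}}"
    by (auto simp: set_n_lists simp del: upt_Suc) blast
  then have "sat B w (literals_conj sig n S) \<longleftrightarrow>
      (\<forall>i<length sig. \<forall>xs. length xs = sig ! i \<and> set xs \<subseteq> {..n} \<longrightarrow> sat B w (literal S i xs))"
    unfolding literals_conj_def sat_conjs lits by blast
  then show ?thesis by (simp only: sat_literal)
qed

lemma sat_diagram: "sat B w (diagram sig n S) \<longleftrightarrow> inj_on w {..n} \<and>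
   (\<forall>i<length sig. \<forall>xs. length xs = sig ! i \<and> set xs \<subseteq> {..n} \<longrightarrow> B i (map w xs) = S i xs)"
  unfolding diagram_def by (simp add: sat_distinct_conj sat_literals_conj)

lemma wf_qf_diagram: "wf_qf sig (diagram sig n S)"
  unfolding diagram_def distinct_conj_def literals_conj_def literal_def
  by (auto simp: wf_qf_conjs set_n_lists)

lemma holds_diagram: "holds S (diagram sig n S)"
  unfolding holds_def sat_diagram by (intro exI[of _ id]) simp

lemma diagram_in_Th_sigma1: "{diagram sig n S} \<in> Th_sigma1 sig S"
  using singleton_in_Th_sigma1_iff[OF wf_qf_diagram] holds_diagram by blast

lemma finite_inj_on_extends_to_bij:
  fixes w :: "nat \<Rightarrow> nat"
  assumes "finite F" and "inj_on w F"
  shows "\<exists>f. bij f \<and> (\<forall>x\<in>F. f x = w x)"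
proof -
  define G where "G = w ` F"
  define g where "g = enumerate (- G) \<circ> inv_into UNIV (enumerate (- F))"
  have "infinite (- F)" "infinite (- G)"
    using assms(1) unfolding G_def by (simp_all add: Compl_eq_Diff_UNIV infinite_UNIV_nat)
  then have "bij_betw g (- F) (- G)"
    unfolding g_def by (meson bij_betw_inv_into bij_betw_trans bij_enumerate)
  moreover have "bij_betw w F G" unfolding G_def using assms(2) by (simp add: bij_betw_def)
  ultimately have "bij_betw (\<lambda>x. if x \<in> F then w x else g x) (F \<union> - F) (G \<union> - G)"
    by (intro bij_betw_disjoint_Un) auto
  then show ?thesis by (intro exI[of _ "\<lambda>x. if x \<in> F then w x else g x"]) auto
qed

lemma iso_copy_extending_restr:
  assumes wS: "wf_struc sig S" and wB: "wf_struc sig B" and "holds B (diagram sig n S)"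
  shows "\<exists>T. wf_struc sig T \<and> iso T B \<and> restr T n = restr S n"
proof -
  obtain w where inj: "inj_on w {..n}"
    and lit: "\<forall>i<length sig. \<forall>xs. length xs = sig ! i \<and> set xs \<subseteq> {..n} \<longrightarrow> B i (map w xs) = S i xs"
    using assms(3) unfolding holds_def sat_diagram by blast
  obtain f where f: "bij f" "\<forall>x\<le>n. f x = w x"
    using finite_inj_on_extends_to_bij[OF _ inj] by auto
  define T where "T i xs = B i (map f xs)" for i xs
  have "wf_struc sig T" using wB unfolding wf_struc_def T_def by (metis length_map)
  moreover have "iso T B" unfolding iso_def T_def using f(1) by blast
  moreover have "T i xs = S i xs" if "set xs \<subseteq> {..n}" for i xs
  proof -
    have "map f xs = map w xs" using that f(2) by (auto simp: map_eq_conv)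
    then have "T i xs = B i (map w xs)" unfolding T_def by (simp del: map_eq_conv)
    then show ?thesis using lit that wB wS unfolding wf_struc_def by (metis length_map)
  qed
  then have "restr T n = restr S n" unfolding restr_def by (auto simp: fun_eq_iff)
  ultimately show ?thesis by blast
qed

section \<open>Non-U-shaped learnability implies solidity\<close>

lemma LD_memberI: "A \<in> K \<Longrightarrow> wf_struc sig T \<Longrightarrow> iso T A \<Longrightarrow> T \<in> LD sig K"
  unfolding LD_def by blast

lemma nUs_learns_converges:
  "nUs_learns sig K M \<Longrightarrow> S \<in> LD sig K \<Longrightarrow> A \<in> K \<Longrightarrow> iso S A \<Longrightarrow>
     \<forall>\<^sub>F n in sequentially. M (restr S n) = Some A"
  unfolding nUs_learns_def eventually_sequentially by blast

lemma nUs_learns_keeps_correct: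
  assumes L: "nUs_learns sig K M" and S: "S \<in> LD sig K" "A \<in> K" "iso S A"
    and n: "M (restr S n) = Some A" "n \<le> m"
  shows "M (restr S m) = Some A"
proof -
  define n0 where "n0 = (LEAST k. M (restr S k) = Some A)"
  have n0: "M (restr S n0) = Some A" "n0 \<le> n" "\<forall>k<n0. M (restr S k) \<noteq> Some A"
    using n(1) unfolding n0_def by (auto intro: LeastI Least_le dest: not_less_Least)
  then have "\<forall>k>n0. M (restr S k) = Some A"
    using L S unfolding nUs_learns_def by blast
  then show ?thesis using n0 n(2) by (cases "m = n0") auto
qed

lemma nUs_learns_diagram_separates:
  assumes L: "nUs_learns sig K M" and fam: "family sig K"
    and K: "A \<in> K" "B \<in> K" "A \<noteq> B"
    and T: "wf_struc sig T" "iso T A" "M (restr T m) = Some A"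
    and B_diagram: "holds B (diagram sig m T)"
  shows "\<not> Th_sigma1 sig B \<subseteq> Th_sigma1 sig A"
proof
  assume Th_BA: "Th_sigma1 sig B \<subseteq> Th_sigma1 sig A"
  have wf: "wf_struc sig A" "wf_struc sig B" using fam K unfolding family_def by auto
  obtain T' where T': "wf_struc sig T'" "iso T' B" "restr T' m = restr T m"
    using iso_copy_extending_restr[OF T(1) wf(2) B_diagram] by blast
  obtain N where N: "\<forall>n\<ge>N. M (restr T' n) = Some B"
    using nUs_learns_converges[OF L LD_memberI[OF K(2) T'(1,2)] K(2) T'(2)]
    unfolding eventually_sequentially by blast
  define m' where "m' = max N (Suc m)"
  have m': "m < m'" "M (restr T' m') = Some B" using N unfolding m'_def by auto
  have "{diagram sig m' T'} \<in> Th_sigma1 sig A"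
    using diagram_in_Th_sigma1 Th_sigma1_iso[OF T'(2)] Th_BA by blast
  then have "holds A (diagram sig m' T')"
    using singleton_in_Th_sigma1_iff wf_qf_diagram by blast
  then obtain T'' where T'': "wf_struc sig T''" "iso T'' A" "restr T'' m' = restr T' m'"
    using iso_copy_extending_restr[OF T'(1) wf(1)] by blast
  have "restr T'' m = restr T m" using restr_eq_mono[OF T''(3)] m'(1) T'(3) by simp
  then have "M (restr T'' m') = Some A"
    using nUs_learns_keeps_correct[OF L LD_memberI[OF K(1) T''(1,2)] K(1) T''(2), of m m']
      T(3) m'(1) by simp
  then show False using T''(3) m'(2) K(3) by simp
qed

lemma nUs_learns_locks_on_self:
  "nUs_learns sig K M \<Longrightarrow> family sig K \<Longrightarrow> A \<in> K \<Longrightarrow> \<exists>m. M (restr A m) = Some A"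
  using nUs_learns_converges[of sig K M A A] LD_memberI[of A K sig A] iso_refl
  unfolding family_def eventually_sequentially by blast

lemma nUs_learns_imp_sigma1_partial_order:
  assumes L: "nUs_learns sig K M" and fam: "family sig K"
  shows "sigma1_partial_order sig K"
  unfolding sigma1_partial_order_def
proof (intro ballI impI notI)
  fix A B assume K: "A \<in> K" "B \<in> K" "A \<noteq> B" and Th_eq: "Th_sigma1 sig A = Th_sigma1 sig B"
  obtain m where m: "M (restr A m) = Some A" using nUs_learns_locks_on_self[OF L fam K(1)] by blast
  have "{diagram sig m A} \<in> Th_sigma1 sig B" using diagram_in_Th_sigma1 Th_eq by blast
  then have "holds B (diagram sig m A)" using singleton_in_Th_sigma1_iff[OF wf_qf_diagram] by blast
  moreover have "wf_struc sig A" using fam K(1) unfolding family_def by blast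
  ultimately show False using nUs_learns_diagram_separates[OF L fam K _ iso_refl m] Th_eq by simp
qed

lemma nUs_learns_Th_sigma1_not_covered:
  assumes L: "nUs_learns sig K M" and fam: "family sig K" and A: "A \<in> K"
  shows "Th_sigma1 sig A - \<Union>{Th_sigma1 sig B | B. B \<in> K \<and> Th_sigma1 sig B \<subset> Th_sigma1 sig A} \<noteq> {}"
proof -
  define \<Phi> where
    "\<Phi> = {diagram sig m T | T m. wf_struc sig T \<and> iso T A \<and> M (restr T m) = Some A}"
  obtain m where m: "M (restr A m) = Some A" using nUs_learns_locks_on_self[OF L fam A] by blast
  have "wf_struc sig A" using fam A unfolding family_def by blast
  then have "diagram sig m A \<in> \<Phi>" unfolding \<Phi>_def using iso_refl m by blast
  moreover have "holds A (diagram sig m A)" by (rule holds_diagram)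
  moreover have "sigma1_sentence sig \<Phi>"
    unfolding sigma1_sentence_def \<Phi>_def using wf_qf_diagram by (auto intro: countableI_type)
  ultimately have "\<Phi> \<in> Th_sigma1 sig A" unfolding Th_sigma1_def models_sigma1_iff_holds by blast
  moreover have "\<Phi> \<notin> Th_sigma1 sig B" if B: "B \<in> K" "Th_sigma1 sig B \<subset> Th_sigma1 sig A" for B
  proof
    assume "\<Phi> \<in> Th_sigma1 sig B"
    then obtain \<psi> where "\<psi> \<in> \<Phi>" "holds B \<psi>"
      unfolding Th_sigma1_def models_sigma1_iff_holds by blast
    then obtain T m' where T: "wf_struc sig T" "iso T A" "M (restr T m') = Some A"
      and "holds B (diagram sig m' T)"
      unfolding \<Phi>_def by blast
    moreover have "A \<noteq> B" using B(2) by blast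
    ultimately show False using nUs_learns_diagram_separates[OF L fam A B(1)] B(2) by blast
  qed
  ultimately show ?thesis by blast
qed

lemma nUs_learns_imp_solid:
  assumes L: "nUs_learns sig K M" and fam: "family sig K"
  shows "solid_sigma1_partial_order sig K"
  unfolding solid_sigma1_partial_order_def
proof (intro conjI ballI)
  show "sigma1_partial_order sig K" by (rule nUs_learns_imp_sigma1_partial_order[OF L fam])
next
  fix A assume "A \<in> K"
  then show "Th_sigma1 sig A - \<Union>{Th_sigma1 sig B | B. B \<in> K \<and> Th_sigma1 sig B \<subset> Th_sigma1 sig A} \<noteq> {}"
    by (rule nUs_learns_Th_sigma1_not_covered[OF L fam])
qed

section \<open>A learner for solid partial orders\<close>

definition tell_tales :: "nat list \<Rightarrow> struc set \<Rightarrow> (struc \<Rightarrow> qf set) \<Rightarrow> bool" where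
  "tell_tales sig K \<phi> \<longleftrightarrow> (\<forall>A\<in>K. \<phi> A \<in> Th_sigma1 sig A \<and>
      (\<forall>B\<in>K. Th_sigma1 sig B \<subset> Th_sigma1 sig A \<longrightarrow> \<phi> A \<notin> Th_sigma1 sig B))"

lemma solid_imp_tell_tales:
  assumes "solid_sigma1_partial_order sig K"
  shows "\<exists>\<phi>. tell_tales sig K \<phi>"
proof -
  have "\<exists>\<Phi>. \<Phi> \<in> Th_sigma1 sig A \<and>
      (\<forall>B\<in>K. Th_sigma1 sig B \<subset> Th_sigma1 sig A \<longrightarrow> \<Phi> \<notin> Th_sigma1 sig B)" if "A \<in> K" for A
  proof -
    have "Th_sigma1 sig A - \<Union>{Th_sigma1 sig B | B. B \<in> K \<and> Th_sigma1 sig B \<subset> Th_sigma1 sig A} \<noteq> {}"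
      using assms that unfolding solid_sigma1_partial_order_def by (elim conjE bspec)
    then obtain \<Phi> where "\<Phi> \<in> Th_sigma1 sig A"
      and "\<Phi> \<notin> \<Union>{Th_sigma1 sig B | B. B \<in> K \<and> Th_sigma1 sig B \<subset> Th_sigma1 sig A}"
      by (meson DiffE ex_in_conv)
    then show ?thesis by blast
  qed
  then show ?thesis unfolding tell_tales_def by (rule bchoice[rule_format])
qed

locale tell_tale_learner =
  fixes sig :: "nat list" and K :: "struc set" and \<phi> :: "struc \<Rightarrow> qf set"
  assumes countable_K: "countable K"
    and partial_order: "sigma1_partial_order sig K"
    and tell_tales: "tell_tales sig K \<phi>"
begin

definition candidate :: "nat \<Rightarrow> struc \<Rightarrow> struc \<Rightarrow> bool" where
  "candidate k R B \<longleftrightarrow> B \<in> K \<and> (\<exists>\<psi>\<in>\<phi> B. holds_below k R \<psi>) \<and> (\<forall>\<psi>. holds_below k R \<psi> \<longrightarrow> holds B \<psi>)"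

definition least_candidate :: "nat \<Rightarrow> struc \<Rightarrow> struc option" where
  "least_candidate k R =
     (if \<exists>B. candidate k R B then Some (ARG_MIN (to_nat_on K) B. candidate k R B) else None)"

primrec guess :: "struc \<Rightarrow> nat \<Rightarrow> struc option" where
  "guess R 0 = least_candidate 0 R"
| "guess R (Suc n) = (case guess R n of
      Some B \<Rightarrow> if candidate (Suc n) R B then Some B else least_candidate (Suc n) R
    | None \<Rightarrow> least_candidate (Suc n) R)"

lemma least_candidate_SomeD: "least_candidate k R = Some B \<Longrightarrow> candidate k R B"
  unfolding least_candidate_def by (metis arg_min_natI option.distinct(1) option.inject)

lemma least_candidate_le:
  assumes "candidate k R C"
  shows "\<exists>B. least_candidate k R = Some B \<and> candidate k R B \<and> to_nat_on K B \<le> to_nat_on K C"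
  using assms arg_min_natI[of "candidate k R" C] arg_min_nat_le[of "candidate k R" C]
  unfolding least_candidate_def by auto

lemma guess_candidate: "guess R n = Some B \<Longrightarrow> candidate n R B"
  by (induction n arbitrary: B) (auto simp: least_candidate_SomeD split: option.splits if_splits)

lemma candidate_restr: "k \<le> n \<Longrightarrow> candidate k (snd (restr S n)) B \<longleftrightarrow> candidate k S B"
  unfolding candidate_def by (simp add: holds_below_restr)

lemma least_candidate_restr:
  assumes "k \<le> n"
  shows "least_candidate k (snd (restr S n)) = least_candidate k S"
proof -
  have "candidate k (snd (restr S n)) = candidate k S" using candidate_restr[OF assms] by blast
  then show ?thesis unfolding least_candidate_def by simp
qed

lemma guess_restr: "guess (snd (restr S n)) n = guess S n"
proof -
  have "guess (snd (restr S n)) k = guess S k" if "k \<le> n" for k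
    using that
    by (induction k) (simp_all add: candidate_restr least_candidate_restr split: option.split)
  then show ?thesis by simp
qed

lemma candidate_iso_iff:
  assumes "iso S A"
  shows "candidate k S A \<longleftrightarrow> A \<in> K \<and> (\<exists>\<psi>\<in>\<phi> A. holds_below k S \<psi>)"
  using holds_below_imp_holds iso_holds[OF assms] unfolding candidate_def by blast

lemma candidate_iso_mono: "iso S A \<Longrightarrow> candidate k S A \<Longrightarrow> k \<le> k' \<Longrightarrow> candidate k' S A"
  unfolding candidate_iso_iff using holds_below_mono by blast

lemma eventually_candidate_self:
  assumes S: "iso S A" "A \<in> K"
  shows "\<forall>\<^sub>F k in sequentially. candidate k S A"
proof -
  have "\<phi> A \<in> Th_sigma1 sig A" using tell_tales S(2) unfolding tell_tales_def by blast
  then obtain \<psi> where \<psi>: "\<psi> \<in> \<phi> A" "holds S \<psi>"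
    unfolding Th_sigma1_def models_sigma1_iff_holds iso_holds[OF S(1)] by blast
  have "\<forall>\<^sub>F k in sequentially. holds_below k S \<psi>" by (rule holds_imp_eventually_holds_below[OF \<psi>(2)])
  then show ?thesis unfolding candidate_iso_iff[OF S(1)] using S(2) \<psi>(1) by (auto elim: eventually_mono)
qed

lemma guess_keeps_correct:
  assumes "iso S A" "guess S n = Some A" "n \<le> m"
  shows "guess S m = Some A"
  using assms(3)
proof (induction m rule: dec_induct)
  case (step m)
  have "candidate (Suc m) S A"
    using candidate_iso_mono[OF assms(1) guess_candidate[OF assms(2)]] step(1) by simp
  then show ?case using step by simp
qed (fact assms(2))

lemma frequently_candidate_eq:
  assumes S: "iso S A" "A \<in> K" and freq: "\<exists>\<^sub>F k in sequentially. candidate k S B"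
  shows "B = A"
proof -
  obtain k0 where k0: "candidate k0 S B" using frequently_ex[OF freq] by blast
  then obtain \<psi> where "\<psi> \<in> \<phi> B" "holds A \<psi>"
    unfolding candidate_def using holds_below_imp_holds iso_holds[OF S(1)] by blast
  have B: "B \<in> K" using k0 unfolding candidate_def by blast
  have "\<phi> B \<in> Th_sigma1 sig B" using tell_tales B unfolding tell_tales_def by blast
  with \<open>\<psi> \<in> \<phi> B\<close> \<open>holds A \<psi>\<close> have tell_tale_B: "\<phi> B \<in> Th_sigma1 sig A"
    unfolding Th_sigma1_def models_sigma1_iff_holds by blast
  have "Th_sigma1 sig A \<subseteq> Th_sigma1 sig B"
  proof
    fix \<Phi> assume "\<Phi> \<in> Th_sigma1 sig A"
    then obtain \<chi> where \<chi>: "\<chi> \<in> \<Phi>" "holds S \<chi>" "sigma1_sentence sig \<Phi>"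
      unfolding Th_sigma1_def models_sigma1_iff_holds iso_holds[OF S(1)] by blast
    have "\<exists>\<^sub>F k in sequentially. holds_below k S \<chi> \<and> candidate k S B"
      using frequently_eventually_conj[OF freq holds_imp_eventually_holds_below[OF \<chi>(2)]] .
    then obtain k where "holds_below k S \<chi>" "candidate k S B" using frequently_ex by blast
    then have "holds B \<chi>" unfolding candidate_def by blast
    with \<chi> show "\<Phi> \<in> Th_sigma1 sig B" unfolding Th_sigma1_def models_sigma1_iff_holds by blast
  qed
  moreover have "\<not> Th_sigma1 sig A \<subset> Th_sigma1 sig B"
    using tell_tales S(2) B tell_tale_B unfolding tell_tales_def by blast
  ultimately have "Th_sigma1 sig A = Th_sigma1 sig B" by blast
  then show ?thesis using partial_order S(2) B unfolding sigma1_partial_order_def by metis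
qed

lemma eventually_least_candidate:
  assumes S: "iso S A" "A \<in> K"
  shows "\<forall>\<^sub>F k in sequentially. least_candidate k S = Some A"
proof -
  define F where "F = {B \<in> K. to_nat_on K B < to_nat_on K A}"
  have inj: "inj_on (to_nat_on K) K" using countable_K by blast
  have "finite F"
  proof (rule finite_imageD)
    show "finite (to_nat_on K ` F)" by (rule finite_subset[of _ "{..<to_nat_on K A}"]) (auto simp: F_def)
    show "inj_on (to_nat_on K) F" using inj by (rule inj_on_subset) (auto simp: F_def)
  qed
  moreover have "\<forall>\<^sub>F k in sequentially. \<not> candidate k S B" if "B \<in> F" for B
    using frequently_candidate_eq[OF S, of B] that unfolding F_def not_frequently[symmetric] by blast
  ultimately have "\<forall>\<^sub>F k in sequentially. \<forall>B\<in>F. \<not> candidate k S B"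
    by (rule eventually_ball_finite[rule_format])
  with eventually_candidate_self[OF S] show ?thesis
  proof eventually_elim
    case (elim k)
    then obtain B where B: "least_candidate k S = Some B" "candidate k S B"
      "to_nat_on K B \<le> to_nat_on K A"
      using least_candidate_le by blast
    then have "B \<in> K" "B \<notin> F" using elim unfolding candidate_def by auto
    then have "to_nat_on K B = to_nat_on K A" using B(3) unfolding F_def by simp
    then show ?case using B(1) inj_onD[OF inj] \<open>B \<in> K\<close> S(2) by metis
  qed
qed

lemma guess_Suc_cases:
  "least_candidate (Suc k) S = Some A \<Longrightarrow>
     guess S (Suc k) = Some A \<or> (\<exists>B. guess S k = Some B \<and> guess S (Suc k) = Some B)"
  by (auto split: option.split)

lemma guess_reaches:
  assumes S: "iso S A" "A \<in> K"
  shows "\<exists>n. guess S n = Some A"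
proof (rule ccontr)
  assume never: "\<nexists>n. guess S n = Some A"
  obtain N where N: "\<And>k. k \<ge> N \<Longrightarrow> least_candidate k S = Some A"
    using eventually_least_candidate[OF S] unfolding eventually_sequentially by blast
  then have stays: "\<exists>B. guess S k = Some B \<and> guess S (Suc k) = Some B" if "k \<ge> N" for k
    using guess_Suc_cases never that le_SucI by blast
  then obtain B where B: "guess S N = Some B" by blast
  have "guess S k = Some B" if "N \<le> k" for k
    using that
  proof (induction k rule: dec_induct)
    case (step k)
    then show ?case using stays[of k] by auto
  qed (fact B)
  then have "\<forall>\<^sub>F k in sequentially. candidate k S B"
    unfolding eventually_sequentially using guess_candidate by blast
  then have "B = A" by (rule frequently_candidate_eq[OF S eventually_frequently[OF sequentially_bot]])
  then show False using B never by blast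
qed

definition learner :: learner where
  "learner = (\<lambda>(n, R). guess R n)"

lemma learner_restr: "learner (restr S n) = guess S n"
  using guess_restr[of S n] unfolding learner_def restr_def by simp

lemma nUs_learns_learner: "nUs_learns sig K learner"
  unfolding nUs_learns_def learner_restr
proof (intro conjI ballI allI impI)
  fix S s
  show "guess S s = None \<or> (\<exists>A\<in>K. guess S s = Some A)"
  proof (cases "guess S s")
    case (Some B)
    then show ?thesis using guess_candidate[OF Some] unfolding candidate_def by blast
  qed simp
next
  fix S A assume "A \<in> K" "iso S A"
  then obtain n where "guess S n = Some A" using guess_reaches by blast
  then show "\<exists>n0. \<forall>n\<ge>n0. guess S n = Some A" using guess_keeps_correct[OF \<open>iso S A\<close>] by blast
next
  fix S A n0 m assume "iso S A" "guess S n0 = Some A \<and> (\<forall>k<n0. guess S k \<noteq> Some A)" "n0 < m"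
  then show "guess S m = Some A" using guess_keeps_correct[of S A n0 m] by simp
qed

end

lemma solid_imp_nUs_learnable:
  assumes fam: "family sig K" and solid: "solid_sigma1_partial_order sig K"
  shows "nUs_learnable sig K"
proof -
  obtain \<phi> where "tell_tales sig K \<phi>" using solid_imp_tell_tales[OF solid] by blast
  then interpret tell_tale_learner sig K \<phi>
  proof unfold_locales
    show "countable K" using fam unfolding family_def by blast
    show "sigma1_partial_order sig K" using solid unfolding solid_sigma1_partial_order_def by (rule conjunct1)
  qed
  show ?thesis unfolding nUs_learnable_def using nUs_learns_learner by blast
qed

theorem mainTheorem11:
  fixes sig :: "nat list" and K :: "struc set"
  assumes "family sig K"
  shows "nUs_learnable sig K \<longleftrightarrow> solid_sigma1_partial_order sig K"
proof
  assume "nUs_learnable sig K"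
  then obtain M where "nUs_learns sig K M" unfolding nUs_learnable_def by blast
  then show "solid_sigma1_partial_order sig K" using nUs_learns_imp_solid assms by blast
next
  assume "solid_sigma1_partial_order sig K"
  then show "nUs_learnable sig K" using solid_imp_nUs_learnable assms by blast
qed

end
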